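(* Let $\mathbb{K}$ be a field, $H$ a Hopf algebra over $\mathbb{K}$ with bijective antipode, $n\in\mathbb{N}$ and $h\in H^{tr}$. Let $B\subseteq A$ be a principal $H$-comodule algebra with a strong connection $\ell$, let $\bar A$ be a right $H$-comodule algebra with $\bar B=\bar A^{coH}$, and let $f:A\to\bar A$ be a unital right $H$-comodule algebra morphism (so $f(B)\subseteq\bar B$ and $\bar\ell:=(f\otimes f)\circ\ell$ is a strong connection for $\bar B\subseteq\bar A$). Then the characteristic classes are natural: $$HC_{2n}(f|_B)\big(\mathrm{chw}_n(\ell)(h)\big)=\mathrm{chw}_n(\bar\ell)(h)\quad\text{in } HC_{2n}(\bar B),$$ i.e. the assignment $[A]\mapsto \mathrm{chw}_n(\ell_A)(h)$ is a natural transformation from the functor sending $B$ to the set of isomorphism classes of principal $H$-comodule algebras over $B$ (with $f$ acting by $[A]\mapsto[\bar B\otimes_B A]\cong[\bar A]$) to cyclic homology $HC_{2n}(-)$.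
   Context: A principal $H$-comodule algebra $B\subseteq A$: $A$ is a right $H$-comodule algebra (coaction $a\mapsto a_{(0)}\otimes a_{(1)}$ an algebra map), $B=A^{coH}$ its coinvariants, the map $A\otimes_BA\to A\otimes H$, $a\otimes_B\tilde a\mapsto a\tilde a_{(0)}\otimes\tilde a_{(1)}$ is bijective and $A$ is faithfully flat over $B$. A strong connection is a linear map $\ell:H\to A\otimes A$, $\ell(h)=h^{\langle1\rangle}\otimes h^{\langle2\rangle}$, satisfying $h^{\langle1\rangle}\otimes h^{\langle2\rangle}{}_{(0)}\otimes h^{\langle2\rangle}{}_{(1)}=h_{(1)}{}^{\langle1\rangle}\otimes h_{(1)}{}^{\langle2\rangle}\otimes h_{(2)}$, $h^{\langle1\rangle}{}_{(0)}\otimes h^{\langle2\rangle}\otimes h^{\langle1\rangle}{}_{(1)}=h_{(2)}{}^{\langle1\rangle}\otimes h_{(2)}{}^{\langle2\rangle}\otimes S(h_{(1)})$, and $h^{\langle1\rangle}h^{\langle2\rangle}{}_{(0)}\otimes h^{\langle2\rangle}{}_{(1)}=1_A\otimes h$. Cotraces: $H^{tr}=\{h\in H\mid h_{(1)}\otimes h_{(2)}=h_{(2)}\otimes h_{(1)}\}$. For $h\in H^{tr}$ and $m\in\mathbb{N}$ set $x_m(\ell,h)=h_{(m+1)}{}^{\langle2\rangle}h_{(1)}{}^{\langle1\rangle}\otimes h_{(1)}{}^{\langle2\rangle}h_{(2)}{}^{\langle1\rangle}\otimes\cdots\otimes h_{(m)}{}^{\langle2\rangle}h_{(m+1)}{}^{\langle1\rangle}\in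 B^{\otimes(m+1)}$. The Chern–Weil homomorphism $\mathrm{chw}_n(\ell):H^{tr}\to HC_{2n}(B)$ sends $h$ to the cyclic homology class of $\sum_{i=0}^{2n}(-1)^{\lfloor i/2\rfloor}\frac{i!}{\lfloor i/2\rfloor!}x_i(\ell,h)$ (this is a cycle in Connes' cyclic complex of $B$, by work of Hajac–Maszczyk). $HC_{2n}(f|_B)$ is the map induced on cyclic homology by the algebra map $f|_B:B\to\bar B$. *)

theory Defs
  imports Complex_Main
begin

text \<open>An element of a tensor product of K-vector spaces is represented by a finite
formal sum, i.e. a list of pairs (coefficient, elementary tensor).  Over a field,
two such sums are equal in the tensor product iff every multilinear functional
takes the same value on them; this is the equality used throughout.\<close>

definition ev :: "('x \<Rightarrow> 'k::comm_ring_1) \<Rightarrow> ('k \<times> 'x) list \<Rightarrow> 'k" where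
  "ev \<phi> t = sum_list (map (\<lambda>(c,x). c * \<phi> x) t)"

definition teqF :: "(('x \<Rightarrow> 'k::comm_ring_1) \<Rightarrow> bool) \<Rightarrow> ('k \<times> 'x) list \<Rightarrow> ('k \<times> 'x) list \<Rightarrow> bool" where
  "teqF P t u \<longleftrightarrow> (\<forall>\<phi>. P \<phi> \<longrightarrow> ev \<phi> t = ev \<phi> u)"

definition tscale :: "'k::times \<Rightarrow> ('k \<times> 'x) list \<Rightarrow> ('k \<times> 'x) list" where
  "tscale c t = map (\<lambda>(d,x). (c * d, x)) t"

definition tsub :: "('k::comm_ring_1 \<times> 'x) list \<Rightarrow> ('k \<times> 'x) list \<Rightarrow> ('k \<times> 'x) list" where
  "tsub t u = t @ tscale (-1) u"

definition tin :: "('x \<Rightarrow> bool) \<Rightarrow> ('k \<times> 'x) list \<Rightarrow> bool" where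
  "tin P t \<longleftrightarrow> (\<forall>(c,x)\<in>set t. P x)"

definition linF :: "('k::field \<Rightarrow> 'v::ab_group_add \<Rightarrow> 'v) \<Rightarrow> 'v set \<Rightarrow> ('v \<Rightarrow> 'k) \<Rightarrow> bool" where
  "linF s S \<phi> \<longleftrightarrow> (\<forall>x\<in>S. \<forall>y\<in>S. \<forall>c. \<phi> (x + y) = \<phi> x + \<phi> y \<and> \<phi> (s c x) = c * \<phi> x)"

definition mlin :: "('k::field \<Rightarrow> 'v::ab_group_add \<Rightarrow> 'v) \<Rightarrow> 'v set \<Rightarrow> nat \<Rightarrow> ('v list \<Rightarrow> 'k) \<Rightarrow> bool" where
  "mlin s S m \<phi> \<longleftrightarrow> (\<forall>xs i. xs \<in> lists S \<and> length xs = m \<and> i < m \<longrightarrow> linF s S (\<lambda>a. \<phi> (xs[i := a])))"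

definition bilin :: "('k::field \<Rightarrow> 'v::ab_group_add \<Rightarrow> 'v) \<Rightarrow> ('k \<Rightarrow> 'w::ab_group_add \<Rightarrow> 'w)
     \<Rightarrow> ('v \<times> 'w \<Rightarrow> 'k) \<Rightarrow> bool" where
  "bilin s1 s2 \<phi> \<longleftrightarrow> (\<forall>a. linF s2 UNIV (\<lambda>b. \<phi> (a,b))) \<and> (\<forall>b. linF s1 UNIV (\<lambda>a. \<phi> (a,b)))"

definition trilin :: "('k::field \<Rightarrow> 'u::ab_group_add \<Rightarrow> 'u) \<Rightarrow> ('k \<Rightarrow> 'v::ab_group_add \<Rightarrow> 'v)
     \<Rightarrow> ('k \<Rightarrow> 'w::ab_group_add \<Rightarrow> 'w) \<Rightarrow> ('u \<times> 'v \<times> 'w \<Rightarrow> 'k) \<Rightarrow> bool" where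
  "trilin s1 s2 s3 \<phi> \<longleftrightarrow> (\<forall>b c. linF s1 UNIV (\<lambda>a. \<phi> (a,b,c))) \<and> (\<forall>a c. linF s2 UNIV (\<lambda>b. \<phi> (a,b,c)))
      \<and> (\<forall>a b. linF s3 UNIV (\<lambda>c. \<phi> (a,b,c)))"

text \<open>Equality in U\<otimes>V, U\<otimes>V\<otimes>W, and in S^{\<otimes>m} for a subspace S.\<close>
definition teq2 where "teq2 s1 s2 t u \<longleftrightarrow> teqF (bilin s1 s2) t u"
definition teq3 where "teq3 s1 s2 s3 t u \<longleftrightarrow> teqF (trilin s1 s2 s3) t u"
definition teqL where "teqL s S m t u \<longleftrightarrow> teqF (mlin s S m) t u"

definition tensL :: "'v set \<Rightarrow> nat \<Rightarrow> ('k \<times> 'v list) list \<Rightarrow> bool" where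
  "tensL S m t \<longleftrightarrow> tin (\<lambda>xs. xs \<in> lists S \<and> length xs = m) t"

definition algebra_over :: "('k::field \<Rightarrow> 'a::ring_1 \<Rightarrow> 'a) \<Rightarrow> bool" where
  "algebra_over s \<longleftrightarrow> vector_space s \<and> (\<forall>c x y. s c (x * y) = s c x * y \<and> s c (x * y) = x * s c y)"

definition hopf_algebra ::
  "('k::field \<Rightarrow> 'h::ring_1 \<Rightarrow> 'h) \<Rightarrow> ('h \<Rightarrow> ('k \<times> ('h \<times> 'h)) list) \<Rightarrow> ('h \<Rightarrow> 'k) \<Rightarrow> ('h \<Rightarrow> 'h) \<Rightarrow> bool" where
  "hopf_algebra sH \<Delta> \<epsilon> S \<longleftrightarrow>
     algebra_over sH
   \<and> (\<forall>x y. teq2 sH sH (\<Delta> (x + y)) (\<Delta> x @ \<Delta> y))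
   \<and> (\<forall>c x. teq2 sH sH (\<Delta> (sH c x)) (tscale c (\<Delta> x)))
   \<and> (\<forall>h. teq3 sH sH sH
          (concat (map (\<lambda>(c,(x,y)). map (\<lambda>(d,(a,b)). (c * d, (a, b, y))) (\<Delta> x)) (\<Delta> h)))
          (concat (map (\<lambda>(c,(x,y)). map (\<lambda>(d,(a,b)). (c * d, (x, a, b))) (\<Delta> y)) (\<Delta> h))))
   \<and> linF sH UNIV \<epsilon>
   \<and> (\<forall>h. sum_list (map (\<lambda>(c,(x,y)). sH (c * \<epsilon> x) y) (\<Delta> h)) = h)
   \<and> (\<forall>h. sum_list (map (\<lambda>(c,(x,y)). sH (c * \<epsilon> y) x) (\<Delta> h)) = h)
   \<and> teq2 sH sH (\<Delta> 1) [(1, (1, 1))]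
   \<and> (\<forall>x y. teq2 sH sH (\<Delta> (x * y))
          (concat (map (\<lambda>(c,(x1,x2)). map (\<lambda>(d,(y1,y2)). (c * d, (x1 * y1, x2 * y2))) (\<Delta> y)) (\<Delta> x))))
   \<and> \<epsilon> 1 = 1 \<and> (\<forall>x y. \<epsilon> (x * y) = \<epsilon> x * \<epsilon> y)
   \<and> (\<forall>x y c. S (x + y) = S x + S y \<and> S (sH c x) = sH c (S x))
   \<and> (\<forall>h. sum_list (map (\<lambda>(c,(x,y)). sH c (S x * y)) (\<Delta> h)) = sH (\<epsilon> h) 1)
   \<and> (\<forall>h. sum_list (map (\<lambda>(c,(x,y)). sH c (x * S y)) (\<Delta> h)) = sH (\<epsilon> h) 1)"

definition cotrace :: "('k::field \<Rightarrow> 'h::ring_1 \<Rightarrow> 'h) \<Rightarrow> ('h \<Rightarrow> ('k \<times> ('h \<times> 'h)) list) \<Rightarrow> 'h \<Rightarrow> bool" where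
  "cotrace sH \<Delta> h \<longleftrightarrow> teq2 sH sH (\<Delta> h) (map (\<lambda>(c,(x,y)). (c, (y, x))) (\<Delta> h))"

definition comodule_algebra ::
  "('k::field \<Rightarrow> 'h::ring_1 \<Rightarrow> 'h) \<Rightarrow> ('h \<Rightarrow> ('k \<times> ('h \<times> 'h)) list) \<Rightarrow> ('h \<Rightarrow> 'k)
   \<Rightarrow> ('k \<Rightarrow> 'a::ring_1 \<Rightarrow> 'a) \<Rightarrow> ('a \<Rightarrow> ('k \<times> ('a \<times> 'h)) list) \<Rightarrow> bool" where
  "comodule_algebra sH \<Delta> \<epsilon> sA \<rho> \<longleftrightarrow>
     algebra_over sA
   \<and> (\<forall>x y. teq2 sA sH (\<rho> (x + y)) (\<rho> x @ \<rho> y))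
   \<and> (\<forall>c x. teq2 sA sH (\<rho> (sA c x)) (tscale c (\<rho> x)))
   \<and> (\<forall>x. teq3 sA sH sH
          (concat (map (\<lambda>(c,(a,k)). map (\<lambda>(d,(a',h')). (c * d, (a', h', k))) (\<rho> a)) (\<rho> x)))
          (concat (map (\<lambda>(c,(a,k)). map (\<lambda>(d,(k1,k2)). (c * d, (a, k1, k2))) (\<Delta> k)) (\<rho> x))))
   \<and> (\<forall>x. sum_list (map (\<lambda>(c,(a,k)). sA (c * \<epsilon> k) a) (\<rho> x)) = x)
   \<and> teq2 sA sH (\<rho> 1) [(1, (1, 1))]
   \<and> (\<forall>x y. teq2 sA sH (\<rho> (x * y))
          (concat (map (\<lambda>(c,(a,k)). map (\<lambda>(d,(b,l)). (c * d, (a * b, k * l))) (\<rho> y)) (\<rho> x))))"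

definition coinv :: "('k::field \<Rightarrow> 'h::ring_1 \<Rightarrow> 'h) \<Rightarrow> ('k \<Rightarrow> 'a::ring_1 \<Rightarrow> 'a) \<Rightarrow> ('a \<Rightarrow> ('k \<times> ('a \<times> 'h)) list) \<Rightarrow> 'a set" where
  "coinv sH sA \<rho> = {a. teq2 sA sH (\<rho> a) [(1, (a, 1))]}"

text \<open>Bijectivity of the canonical map A \<otimes>_B A \<rightarrow> A \<otimes> H.  Equality in A \<otimes>_B A
is tested against B-balanced bilinear functionals.\<close>
definition balanced :: "('k::field \<Rightarrow> 'a::ring_1 \<Rightarrow> 'a) \<Rightarrow> 'a set \<Rightarrow> ('a \<times> 'a \<Rightarrow> 'k) \<Rightarrow> bool" where
  "balanced sA B \<phi> \<longleftrightarrow> bilin sA sA \<phi> \<and> (\<forall>x y. \<forall>b\<in>B. \<phi> (x * b, y) = \<phi> (x, b * y))"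

definition canmap :: "('a::ring_1 \<Rightarrow> ('k::comm_ring_1 \<times> ('a \<times> 'h)) list) \<Rightarrow> ('k \<times> ('a \<times> 'a)) list \<Rightarrow> ('k \<times> ('a \<times> 'h)) list" where
  "canmap \<rho> t = concat (map (\<lambda>(c,(x,y)). map (\<lambda>(d,(a,k)). (c * d, (x * a, k))) (\<rho> y)) t)"

definition galois :: "('k::field \<Rightarrow> 'h::ring_1 \<Rightarrow> 'h) \<Rightarrow> ('k \<Rightarrow> 'a::ring_1 \<Rightarrow> 'a) \<Rightarrow> ('a \<Rightarrow> ('k \<times> ('a \<times> 'h)) list) \<Rightarrow> bool" where
  "galois sH sA \<rho> \<longleftrightarrow>
     (\<forall>t u. teq2 sA sH (canmap \<rho> t) (canmap \<rho> u) \<longrightarrow> teqF (balanced sA (coinv sH sA \<rho>)) t u)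
   \<and> (\<forall>u. \<exists>t. teq2 sA sH (canmap \<rho> t) u)"

definition strong_connection ::
  "('k::field \<Rightarrow> 'h::ring_1 \<Rightarrow> 'h) \<Rightarrow> ('h \<Rightarrow> ('k \<times> ('h \<times> 'h)) list) \<Rightarrow> ('h \<Rightarrow> 'h)
   \<Rightarrow> ('k \<Rightarrow> 'a::ring_1 \<Rightarrow> 'a) \<Rightarrow> ('a \<Rightarrow> ('k \<times> ('a \<times> 'h)) list) \<Rightarrow> ('h \<Rightarrow> ('k \<times> ('a \<times> 'a)) list) \<Rightarrow> bool" where
  "strong_connection sH \<Delta> S sA \<rho> ell \<longleftrightarrow>
     (\<forall>x y. teq2 sA sA (ell (x + y)) (ell x @ ell y))
   \<and> (\<forall>c x. teq2 sA sA (ell (sH c x)) (tscale c (ell x)))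
   \<and> (\<forall>h. teq3 sA sA sH
          (concat (map (\<lambda>(c,(a1,a2)). map (\<lambda>(d,(a,k)). (c * d, (a1, a, k))) (\<rho> a2)) (ell h)))
          (concat (map (\<lambda>(c,(h1,h2)). map (\<lambda>(d,(a1,a2)). (c * d, (a1, a2, h2))) (ell h1)) (\<Delta> h))))
   \<and> (\<forall>h. teq3 sA sA sH
          (concat (map (\<lambda>(c,(a1,a2)). map (\<lambda>(d,(a,k)). (c * d, (a, a2, k))) (\<rho> a1)) (ell h)))
          (concat (map (\<lambda>(c,(h1,h2)). map (\<lambda>(d,(a1,a2)). (c * d, (a1, a2, S h1))) (ell h2)) (\<Delta> h))))
   \<and> (\<forall>h. teq2 sA sH
          (concat (map (\<lambda>(c,(a1,a2)). map (\<lambda>(d,(a,k)). (c * d, (a1 * a, k))) (\<rho> a2)) (ell h)))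
          [(1, (1, h))])"

definition comod_alg_hom ::
  "('k::field \<Rightarrow> 'h::ring_1 \<Rightarrow> 'h) \<Rightarrow> ('k \<Rightarrow> 'a::ring_1 \<Rightarrow> 'a) \<Rightarrow> ('a \<Rightarrow> ('k \<times> ('a \<times> 'h)) list)
   \<Rightarrow> ('k \<Rightarrow> 'c::ring_1 \<Rightarrow> 'c) \<Rightarrow> ('c \<Rightarrow> ('k \<times> ('c \<times> 'h)) list) \<Rightarrow> ('a \<Rightarrow> 'c) \<Rightarrow> bool" where
  "comod_alg_hom sH sA \<rho> sC \<rho>' f \<longleftrightarrow>
     (\<forall>x y. f (x + y) = f x + f y) \<and> (\<forall>c x. f (sA c x) = sC c (f x))
   \<and> (\<forall>x y. f (x * y) = f x * f y) \<and> f 1 = 1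
   \<and> (\<forall>a. teq2 sC sH (\<rho>' (f a)) (map (\<lambda>(c,(x,k)). (c, (f x, k))) (\<rho> a)))"

text \<open>Iterated coproduct: idelta m h represents h_(1) \<otimes> ... \<otimes> h_(m+1).\<close>
primrec idelta :: "('h \<Rightarrow> ('k::comm_ring_1 \<times> ('h \<times> 'h)) list) \<Rightarrow> nat \<Rightarrow> 'h \<Rightarrow> ('k \<times> 'h list) list" where
  "idelta \<Delta> 0 h = [(1, [h])]"
| "idelta \<Delta> (Suc m) h = concat (map (\<lambda>(c,hs). map (\<lambda>(d,(x,y)). (c * d, butlast hs @ [x, y])) (\<Delta> (last hs))) (idelta \<Delta> m h))"

text \<open>Expansion of a product of formal sums.\<close>
fun choices :: "('k::comm_ring_1 \<times> 'x) list list \<Rightarrow> ('k \<times> 'x list) list" where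
  "choices [] = [(1, [])]"
| "choices (L # Ls) = concat (map (\<lambda>(c,x). map (\<lambda>(d,xs). (c * d, x # xs)) (choices Ls)) L)"

definition rot1 :: "'x list \<Rightarrow> 'x list" where
  "rot1 xs = last xs # butlast xs"

text \<open>From [(p1,q1),...,(p_{m+1},q_{m+1})] form [q_{m+1} p1, q1 p2, ..., q_m p_{m+1}].\<close>
definition cycprod :: "('a::times \<times> 'a) list \<Rightarrow> 'a list" where
  "cycprod ps = map (\<lambda>(q,p). q * p) (zip (rot1 (map snd ps)) (map fst ps))"

definition xm :: "('h \<Rightarrow> ('k::comm_ring_1 \<times> ('h \<times> 'h)) list) \<Rightarrow> ('h \<Rightarrow> ('k \<times> ('a::times \<times> 'a)) list)
     \<Rightarrow> nat \<Rightarrow> 'h \<Rightarrow> ('k \<times> 'a list) list" where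
  "xm \<Delta> ell m h = concat (map (\<lambda>(c,hs). map (\<lambda>(d,ps). (c * d, cycprod ps)) (choices (map ell hs))) (idelta \<Delta> m h))"

definition chwcoef :: "nat \<Rightarrow> 'k::comm_ring_1" where
  "chwcoef i = of_int ((-1) ^ (i div 2)) * of_nat (fact i div fact (i div 2))"

text \<open>The chain \<Sum>_{i=0}^{2n} (-1)^{\<lfloor>i/2\<rfloor>} i!/\<lfloor>i/2\<rfloor>! x_i(ell,h); its i-th entry is the
component in B^{\<otimes>(i+1)}.\<close>
definition chwchain :: "('h \<Rightarrow> ('k::comm_ring_1 \<times> ('h \<times> 'h)) list) \<Rightarrow> ('h \<Rightarrow> ('k \<times> ('a::times \<times> 'a)) list)
     \<Rightarrow> nat \<Rightarrow> 'h \<Rightarrow> ('k \<times> 'a list) list list" where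
  "chwchain \<Delta> ell n h = map (\<lambda>i. tscale (chwcoef i) (xm \<Delta> ell i h)) [0..<2 * n + 1]"

text \<open>Operators on elementary tensors a0 \<otimes> ... \<otimes> am (lists of length m+1):
cyclic operator t, norm N, Hochschild b and b'.\<close>
definition op_1mt :: "'a list \<Rightarrow> ('k::comm_ring_1 \<times> 'a list) list" where
  "op_1mt xs = [(1, xs), (- ((-1) ^ (length xs - 1)), rot1 xs)]"

definition op_N :: "'a list \<Rightarrow> ('k::comm_ring_1 \<times> 'a list) list" where
  "op_N xs = map (\<lambda>k. ((-1) ^ (k * (length xs - 1)), (rot1 ^^ k) xs)) [0..<length xs]"

definition merge_at :: "nat \<Rightarrow> 'a::times list \<Rightarrow> 'a list" where
  "merge_at i xs = take i xs @ [xs ! i * xs ! (i + 1)] @ drop (i + 2) xs"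

definition op_b' :: "'a::times list \<Rightarrow> ('k::comm_ring_1 \<times> 'a list) list" where
  "op_b' xs = map (\<lambda>i. ((-1) ^ i, merge_at i xs)) [0..<length xs - 1]"

definition op_b :: "'a::times list \<Rightarrow> ('k::comm_ring_1 \<times> 'a list) list" where
  "op_b xs = op_b' xs @ [((-1) ^ (length xs - 1), (last xs * hd xs) # butlast (tl xs))]"

definition tlift :: "('x \<Rightarrow> ('k::times \<times> 'y) list) \<Rightarrow> ('k \<times> 'x) list \<Rightarrow> ('k \<times> 'y) list" where
  "tlift op t = concat (map (\<lambda>(c,x). tscale c (op x)) t)"

text \<open>Horizontal differential out of column p (p \<ge> 1): 1-t from odd columns, N from even ones;
vertical differential in column p: b for even p, -b' for odd p.\<close>
definition dh :: "nat \<Rightarrow> 'a list \<Rightarrow> ('k::comm_ring_1 \<times> 'a list) list" where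
  "dh p = (if odd p then op_1mt else op_N)"

definition dv :: "nat \<Rightarrow> 'a::times list \<Rightarrow> ('k::comm_ring_1 \<times> 'a list) list" where
  "dv p = (if even p then op_b else (\<lambda>xs. tscale (-1) (op_b' xs)))"

text \<open>A chain of total degree N in Tot CC(B) is a list z of length N+1, where z!q lies in
CC_{N-q,q} = B^{\<otimes>(q+1)}.  Total differential Tot_N \<rightarrow> Tot_{N-1}.\<close>
definition bdry :: "nat \<Rightarrow> ('k::comm_ring_1 \<times> 'a::times list) list list \<Rightarrow> ('k \<times> 'a list) list list" where
  "bdry N z = map (\<lambda>j. tlift (dh (N - j)) (z ! j) @ tlift (dv (N - 1 - j)) (z ! (j + 1))) [0..<N]"

text \<open>z and w (chains of total degree N over the subalgebra S) define the same class in
HC_N(S): their difference is a boundary.\<close>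
definition homologous :: "('k::field \<Rightarrow> 'a::ring_1 \<Rightarrow> 'a) \<Rightarrow> 'a set \<Rightarrow> nat
     \<Rightarrow> ('k \<times> 'a list) list list \<Rightarrow> ('k \<times> 'a list) list list \<Rightarrow> bool" where
  "homologous s S N z w \<longleftrightarrow> (\<exists>d. length d = N + 2 \<and> (\<forall>i < N + 2. tensL S (i + 1) (d ! i))
      \<and> (\<forall>j \<le> N. teqL s S (j + 1) (tsub (z ! j) (w ! j)) (bdry (N + 1) d ! j)))"

text \<open>z is a chain with entries in B^{\<otimes>(i+1)} representing the Chern--Weil chain of ell
(which a priori is computed in A^{\<otimes>(i+1)} and lies in B^{\<otimes>(i+1)}); its class is chw_n(ell)(h).\<close>
definition chw_rep :: "('k::field \<Rightarrow> 'a::ring_1 \<Rightarrow> 'a) \<Rightarrow> 'a set \<Rightarrow> ('h \<Rightarrow> ('k \<times> ('h \<times> 'h)) list)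
     \<Rightarrow> ('h \<Rightarrow> ('k \<times> ('a \<times> 'a)) list) \<Rightarrow> nat \<Rightarrow> 'h \<Rightarrow> ('k \<times> 'a list) list list \<Rightarrow> bool" where
  "chw_rep sA B \<Delta> ell n h z \<longleftrightarrow> length z = 2 * n + 1
     \<and> (\<forall>i < 2 * n + 1. tensL B (i + 1) (z ! i) \<and> teqL sA UNIV (i + 1) (z ! i) (chwchain \<Delta> ell n h ! i))"

definition tmapf :: "('a \<Rightarrow> 'c) \<Rightarrow> ('k \<times> 'a list) list \<Rightarrow> ('k \<times> 'c list) list" where
  "tmapf f t = map (\<lambda>(c,xs). (c, map f xs)) t"

end

theory Submission
  imports Defs
begin

text \<open>Since \<open>f\<close> is multiplicative, applying it factorwise to \<open>x\<^sub>i(ell, h)\<close> gives exactly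
\<open>x\<^sub>i((f \<otimes> f) \<circ> ell, h)\<close>. Hence the image of a representative of \<open>chw\<^sub>n(ell)(h)\<close> and any
representative of \<open>chw\<^sub>n((f \<otimes> f) \<circ> ell)(h)\<close> coincide already as chains, so they are homologous
via the zero boundary. The one subtlety is that representatives are only pinned down as tensors over
the target algebra \<open>A'\<close>, whereas homology is taken over its coinvariants \<open>B'\<close>; a linear
retraction of \<open>A'\<close> onto the subspace \<open>B'\<close> shows that \<open>B'\<^sup>\<otimes>\<^sup>m \<rightarrow> A'\<^sup>\<otimes>\<^sup>m\<close> is injective.\<close>

lemma ev_Nil [simp]: "ev \<phi> [] = 0"
  by (simp add: ev_def)

lemma ev_Cons [simp]: "ev \<phi> ((c, x) # t) = c * \<phi> x + ev \<phi> t"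
  by (simp add: ev_def)

lemma ev_append [simp]: "ev \<phi> (t @ u) = ev \<phi> t + ev \<phi> u"
  by (simp add: ev_def)

lemma ev_tscale [simp]: "ev \<phi> (tscale c t) = c * ev \<phi> t"
  by (induction t) (auto simp: tscale_def algebra_simps)

lemma ev_tsub [simp]: "ev \<phi> (tsub t u) = ev \<phi> t - ev \<phi> u"
  by (simp add: tsub_def)

lemma ev_tmapf: "ev \<phi> (tmapf f t) = ev (\<lambda>xs. \<phi> (map f xs)) t"
  by (induction t) (auto simp: tmapf_def)

lemma ev_map_fst: "ev \<phi> (map (\<lambda>(c, (x, k)). (c, (f x, k))) t) = ev (\<lambda>(x, k). \<phi> (f x, k)) t"
  by (induction t) auto

lemma ev_cong: "(\<And>c x. (c, x) \<in> set t \<Longrightarrow> \<phi> x = \<psi> x) \<Longrightarrow> ev \<phi> t = ev \<psi> t"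
  by (induction t) (auto, metis)

lemma tmapf_tscale: "tmapf f (tscale c t) = tscale c (tmapf f t)"
  by (induction t) (auto simp: tmapf_def tscale_def)

lemma tmapf_concat: "tmapf f (concat ts) = concat (map (tmapf f) ts)"
  by (induction ts) (auto simp: tmapf_def)

lemma tensL_tmapf: "tensL V m t \<Longrightarrow> f ` V \<subseteq> W \<Longrightarrow> tensL W m (tmapf f t)"
  by (fastforce simp: tensL_def tin_def tmapf_def)

lemma teqL_trans: "teqL s V m t u \<Longrightarrow> teqL s V m u v \<Longrightarrow> teqL s V m t v"
  by (simp add: teqL_def teqF_def)

lemma teqL_sym: "teqL s V m t u \<Longrightarrow> teqL s V m u t"
  by (simp add: teqL_def teqF_def)

lemma choices_map:
  "choices (map (map (\<lambda>(c, x). (c, g x))) Ls) = map (\<lambda>(d, xs). (d, map g xs)) (choices Ls)"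
  by (induction Ls) (auto simp: map_concat comp_def case_prod_beta intro!: arg_cong[where f=concat])

lemma rot1_map: "xs \<noteq> [] \<Longrightarrow> rot1 (map f xs) = map f (rot1 xs)"
  by (simp add: rot1_def last_map map_butlast)

lemma cycprod_map:
  assumes "\<forall>x y. f (x * y) = f x * f y"
  shows "cycprod (map (\<lambda>(a1, a2). (f a1, f a2)) ps) = map f (cycprod ps)"
proof (cases "ps = []")
  case False
  let ?g = "\<lambda>(a1, a2). (f a1, f a2)"
  have snd: "map snd (map ?g ps) = map f (map snd ps)" and fst: "map fst (map ?g ps) = map f (map fst ps)"
    by auto
  have rot: "rot1 (map f (map snd ps)) = map f (rot1 (map snd ps))"
    using False by (intro rot1_map) simp
  have mult: "map (\<lambda>(q, p). q * p) (zip (map f qs) (map f ps)) = map f (map (\<lambda>(q, p). q * p) (zip qs ps))"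
    for qs ps :: "'a list"
    using assms by (simp add: zip_map_map case_prod_beta)
  show ?thesis
    unfolding cycprod_def snd fst rot mult ..
qed (simp add: cycprod_def)

lemma xm_map:
  assumes "\<forall>x y. f (x * y) = f x * f y"
  shows "tmapf f (xm \<Delta> ell i h) = xm \<Delta> (\<lambda>x. map (\<lambda>(c, (a1, a2)). (c, (f a1, f a2))) (ell x)) i h"
proof -
  let ?g = "\<lambda>(a1, a2). (f a1, f a2)"
  have choices: "choices (map (\<lambda>x. map (\<lambda>(c, (a1, a2)). (c, (f a1, f a2))) (ell x)) hs)
      = map (\<lambda>(d, xs). (d, map ?g xs)) (choices (map ell hs))" for hs
    using choices_map[of ?g "map ell hs"] by (simp add: comp_def split_def)
  show ?thesis
    unfolding xm_def tmapf_concat choices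
    by (auto simp: tmapf_def cycprod_map[OF assms] case_prod_beta comp_def intro!: arg_cong[where f=concat])
qed

lemma chwchain_map:
  assumes "\<forall>x y. f (x * y) = f x * f y"
  shows "map (tmapf f) (chwchain \<Delta> ell n h)
    = chwchain \<Delta> (\<lambda>x. map (\<lambda>(c, (a1, a2)). (c, (f a1, f a2))) (ell x)) n h"
  by (simp add: chwchain_def tmapf_tscale xm_map[OF assms] del: upt_Suc)

lemma mlin_comp:
  fixes g :: "'u::ab_group_add \<Rightarrow> 'v::ab_group_add" and t :: "'k::field \<Rightarrow> 'u \<Rightarrow> 'u"
  assumes "mlin s V m \<phi>" and "\<forall>x y. g (x + y) = g x + g y"
    and "\<forall>c x. g (t c x) = s c (g x)" and "range g \<subseteq> V"
  shows "mlin t UNIV m (\<lambda>xs. \<phi> (map g xs))"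
  unfolding mlin_def linF_def
proof (intro allI impI ballI conjI)
  fix xs :: "'u list" and i x y c
  assume xs: "xs \<in> lists UNIV \<and> length xs = m \<and> i < m"
  have gV: "g a \<in> V" for a
    using assms(4) by blast
  then have "linF s V (\<lambda>a. \<phi> ((map g xs)[i := a]))"
    using assms(1) xs by (simp add: mlin_def in_lists_conv_set)
  then have add: "\<phi> ((map g xs)[i := g a + g b]) = \<phi> ((map g xs)[i := g a]) + \<phi> ((map g xs)[i := g b])"
    and scale: "\<phi> ((map g xs)[i := s c (g a)]) = c * \<phi> ((map g xs)[i := g a])" for a b
    using gV unfolding linF_def by blast+
  show "\<phi> (map g (xs[i := x + y])) = \<phi> (map g (xs[i := x])) + \<phi> (map g (xs[i := y]))"
    and "\<phi> (map g (xs[i := t c x])) = c * \<phi> (map g (xs[i := x]))"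
    using add scale assms(2,3) by (simp_all add: map_update)
qed

lemma teqL_tmapf:
  assumes "teqL t UNIV m u v" and "\<forall>x y. f (x + y) = f x + f y" and "\<forall>c x. f (t c x) = s c (f x)"
  shows "teqL s UNIV m (tmapf f u) (tmapf f v)"
  using assms mlin_comp[of s UNIV m _ f t] by (simp add: teqL_def teqF_def ev_tmapf)

lemma subspace_retraction:
  fixes s :: "'k::field \<Rightarrow> 'v::ab_group_add \<Rightarrow> 'v"
  assumes "vector_space s" and "module.subspace s V"
  obtains P where "Vector_Spaces.linear s s P" "range P \<subseteq> V" "\<forall>x\<in>V. P x = x"
proof -
  interpret vector_space s by fact
  interpret vector_space_pair s s by unfold_locales
  show ?thesis
    using linear_exists_left_inverse_on[OF linear_id assms(2)] that by auto
qed

lemma teqL_subspace: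
  fixes s :: "'k::field \<Rightarrow> 'v::ab_group_add \<Rightarrow> 'v"
  assumes "vector_space s" and "module.subspace s V"
    and "tensL V m t" and "tensL V m u" and "teqL s UNIV m t u"
  shows "teqL s V m t u"
  unfolding teqL_def teqF_def
proof (intro allI impI)
  fix \<phi> assume \<phi>: "mlin s V m \<phi>"
  obtain P where P: "Vector_Spaces.linear s s P" "range P \<subseteq> V" "\<forall>x\<in>V. P x = x"
    using subspace_retraction[OF assms(1,2)] .
  let ?\<psi> = "\<lambda>xs. \<phi> (map P xs)"
  have "mlin s UNIV m ?\<psi>"
    using mlin_comp[OF \<phi> _ _ P(2)] P(1) by (simp add: Vector_Spaces.linear_iff)
  then have "ev ?\<psi> t = ev ?\<psi> u"
    using assms(5) by (simp add: teqL_def teqF_def)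
  moreover have "ev ?\<psi> r = ev \<phi> r" if "tensL V m r" for r
    using that P(3) by (intro ev_cong) (auto simp: tensL_def tin_def map_idI)
  ultimately show "ev \<phi> t = ev \<phi> u"
    using assms(3,4) by simp
qed

lemma coinv_iff: "a \<in> coinv sH sA \<rho> \<longleftrightarrow> (\<forall>\<phi>. bilin sA sH \<phi> \<longrightarrow> ev \<phi> (\<rho> a) = \<phi> (a, 1))"
  by (simp add: coinv_def teq2_def teqF_def)

lemma coinv_subspace:
  assumes "comodule_algebra sH \<Delta> \<epsilon> sA \<rho>"
  shows "module.subspace sA (coinv sH sA \<rho>)"
proof -
  interpret vector_space sA
    using assms by (simp add: comodule_algebra_def algebra_over_def)
  have add: "ev \<phi> (\<rho> (x + y)) = ev \<phi> (\<rho> x) + ev \<phi> (\<rho> y)"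
    and scale: "ev \<phi> (\<rho> (sA c x)) = c * ev \<phi> (\<rho> x)" if "bilin sA sH \<phi>" for \<phi> x y c
    using assms that by (auto simp: comodule_algebra_def teq2_def teqF_def)
  have bilin_fst: "\<phi> (x + y, k) = \<phi> (x, k) + \<phi> (y, k)" "\<phi> (sA c x, k) = c * \<phi> (x, k)"
    if "bilin sA sH \<phi>" for \<phi> x y c k
    using that by (auto simp: bilin_def linF_def)
  show ?thesis
  proof (rule subspaceI)
    show "0 \<in> coinv sH sA \<rho>"
      using scale[of _ 0 0] bilin_fst(2)[of _ 0 0] by (simp add: coinv_iff)
    show "x + y \<in> coinv sH sA \<rho>" if "x \<in> coinv sH sA \<rho>" "y \<in> coinv sH sA \<rho>" for x y
      using that add bilin_fst(1) by (simp add: coinv_iff)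
    show "sA c x \<in> coinv sH sA \<rho>" if "x \<in> coinv sH sA \<rho>" for c x
      using that scale bilin_fst(2) by (simp add: coinv_iff)
  qed
qed

lemma comod_alg_hom_coinv:
  assumes "comod_alg_hom sH sA \<rho> sC \<rho>' f"
  shows "f ` coinv sH sA \<rho> \<subseteq> coinv sH sC \<rho>'"
proof (clarsimp simp: coinv_iff)
  fix b \<phi>
  assume b: "\<forall>\<psi>. bilin sA sH \<psi> \<longrightarrow> ev \<psi> (\<rho> b) = \<psi> (b, 1)" and \<phi>: "bilin sC sH \<phi>"
  have "bilin sA sH (\<lambda>(x, k). \<phi> (f x, k))"
    using assms \<phi> by (auto simp: comod_alg_hom_def bilin_def linF_def)
  moreover have "ev \<phi> (\<rho>' (f b)) = ev (\<lambda>(x, k). \<phi> (f x, k)) (\<rho> b)"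
    using assms \<phi> by (simp add: comod_alg_hom_def teq2_def teqF_def ev_map_fst)
  ultimately show "ev \<phi> (\<rho>' (f b)) = \<phi> (f b, 1)"
    using b by simp
qed

lemma bdry_zero: "j < N \<Longrightarrow> bdry N (replicate (N + 1) []) ! j = []"
  by (simp add: bdry_def tlift_def nth_append del: replicate_Suc upt_Suc)

lemma teqL_imp_homologous:
  assumes "\<forall>j \<le> N. teqL s S (j + 1) (z ! j) (w ! j)"
  shows "homologous s S N z w"
  unfolding homologous_def
proof (intro exI[of _ "replicate (N + 1 + 1) []"] conjI allI impI)
  fix j assume j: "j \<le> N"
  then have "j < N + 1"
    by simp
  with j assms show "teqL s S (j + 1) (tsub (z ! j) (w ! j)) (bdry (N + 1) (replicate (N + 1 + 1) []) ! j)"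
    unfolding bdry_zero[OF \<open>j < N + 1\<close>] by (simp add: teqL_def teqF_def)
qed (simp_all add: tensL_def tin_def del: replicate_Suc)

lemma chw_rep_map_eq:
  assumes Abar: "comodule_algebra sH \<Delta> \<epsilon> sC \<rho>'" and hom: "comod_alg_hom sH sA \<rho> sC \<rho>' f"
    and z: "chw_rep sA (coinv sH sA \<rho>) \<Delta> ell n h z"
    and w: "chw_rep sC (coinv sH sC \<rho>') \<Delta> (\<lambda>x. map (\<lambda>(c, (a1, a2)). (c, (f a1, f a2))) (ell x)) n h w"
    and j: "j \<le> 2 * n"
  shows "teqL sC (coinv sH sC \<rho>') (j + 1) (map (tmapf f) z ! j) (w ! j)"
proof -
  let ?ell' = "\<lambda>x. map (\<lambda>(c, (a1, a2)). (c, (f a1, f a2))) (ell x)"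
  have f: "\<forall>x y. f (x + y) = f x + f y" "\<forall>c x. f (sA c x) = sC c (f x)" "\<forall>x y. f (x * y) = f x * f y"
    using hom by (auto simp: comod_alg_hom_def)
  have zj: "map (tmapf f) z ! j = tmapf f (z ! j)"
    using z j by (simp add: chw_rep_def)
  have "teqL sC UNIV (j + 1) (tmapf f (z ! j)) (tmapf f (chwchain \<Delta> ell n h ! j))"
    using z j by (intro teqL_tmapf[OF _ f(1,2)]) (auto simp: chw_rep_def)
  also have "tmapf f (chwchain \<Delta> ell n h ! j) = chwchain \<Delta> ?ell' n h ! j"
    using j chwchain_map[OF f(3), of \<Delta> ell n h] by (simp add: chwchain_def del: upt_Suc)
  finally have "teqL sC UNIV (j + 1) (tmapf f (z ! j)) (chwchain \<Delta> ?ell' n h ! j)" .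
  moreover have "teqL sC UNIV (j + 1) (w ! j) (chwchain \<Delta> ?ell' n h ! j)"
    using w j by (simp add: chw_rep_def)
  ultimately have "teqL sC UNIV (j + 1) (tmapf f (z ! j)) (w ! j)"
    by (blast intro: teqL_trans teqL_sym)
  moreover have "tensL (coinv sH sC \<rho>') (j + 1) (tmapf f (z ! j))"
    using z j by (intro tensL_tmapf[OF _ comod_alg_hom_coinv[OF hom]]) (simp add: chw_rep_def)
  moreover have "tensL (coinv sH sC \<rho>') (j + 1) (w ! j)"
    using w j by (simp add: chw_rep_def)
  moreover have "vector_space sC"
    using Abar by (simp add: comodule_algebra_def algebra_over_def)
  ultimately show ?thesis
    unfolding zj using teqL_subspace[OF _ coinv_subspace[OF Abar]] by blast
qed

text \<open>Principality, the strong connection, the cotrace property and the Hopf structure are what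
make the Chern--Weil chains cycles; naturality itself needs none of them.\<close>

theorem mainTheorem5:
  fixes sH :: "'k::field \<Rightarrow> 'h::ring_1 \<Rightarrow> 'h"
    and \<Delta> :: "'h \<Rightarrow> ('k \<times> ('h \<times> 'h)) list" and \<epsilon> :: "'h \<Rightarrow> 'k" and S :: "'h \<Rightarrow> 'h"
    and sA :: "'k \<Rightarrow> 'a::ring_1 \<Rightarrow> 'a" and \<rho> :: "'a \<Rightarrow> ('k \<times> ('a \<times> 'h)) list"
    and ell :: "'h \<Rightarrow> ('k \<times> ('a \<times> 'a)) list"
    and sC :: "'k \<Rightarrow> 'c::ring_1 \<Rightarrow> 'c" and \<rho>' :: "'c \<Rightarrow> ('k \<times> ('c \<times> 'h)) list"
    and f :: "'a \<Rightarrow> 'c" and n :: nat and h :: 'h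
  assumes hopf: "hopf_algebra sH \<Delta> \<epsilon> S" and bij_S: "bij S"
    and tr: "cotrace sH \<Delta> h"
    and A: "comodule_algebra sH \<Delta> \<epsilon> sA \<rho>" and principal: "galois sH sA \<rho>"
    and conn: "strong_connection sH \<Delta> S sA \<rho> ell"
    and Abar: "comodule_algebra sH \<Delta> \<epsilon> sC \<rho>'"
    and hom: "comod_alg_hom sH sA \<rho> sC \<rho>' f"
  shows "\<forall>z w. chw_rep sA (coinv sH sA \<rho>) \<Delta> ell n h z
           \<and> chw_rep sC (coinv sH sC \<rho>') \<Delta> (\<lambda>x. map (\<lambda>(c,(a1,a2)). (c, (f a1, f a2))) (ell x)) n h w
           \<longrightarrow> homologous sC (coinv sH sC \<rho>') (2 * n) (map (tmapf f) z) w"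
proof (intro allI impI)
  fix z w
  assume "chw_rep sA (coinv sH sA \<rho>) \<Delta> ell n h z
    \<and> chw_rep sC (coinv sH sC \<rho>') \<Delta> (\<lambda>x. map (\<lambda>(c,(a1,a2)). (c, (f a1, f a2))) (ell x)) n h w"
  then have "\<forall>j \<le> 2 * n. teqL sC (coinv sH sC \<rho>') (j + 1) (map (tmapf f) z ! j) (w ! j)"
    using chw_rep_map_eq[OF Abar hom] by blast
  then show "homologous sC (coinv sH sC \<rho>') (2 * n) (map (tmapf f) z) w"
    by (rule teqL_imp_homologous)
qed

end
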